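(* Let $q\ge2$, $A\in\mathbb{R}_{\geq0}^{q\times q}$, and let $V$ be the value of the one-shot two-player zero-sum game defined by $A$. Then there exists a randomized algorithm $R$ without advice for the repeated matrix game with cost matrix $A$ such that $\mathbb{E}[R(\sigma)]\leq Vn$ for every input $\sigma$ of length $n$. Furthermore, there exists a deterministic algorithm $\mathrm{ALG}$ reading $\lceil\log_2 q\rceil$ bits of advice such that $\mathrm{ALG}(\sigma)\leq Vn$ for every input $\sigma$ of length $n$.
   Context: The one-shot game defined by $A$: the row player picks $x\in[q]$, the column player picks $y\in[q]$, and the column player pays $A(x,y)$; $V=\max_\mu\min_\nu\mathbb{E}_{x\sim\mu,y\sim\nu}A(x,y)$ over mixed strategies. The repeated matrix game with cost matrix $A$: inputs $\sigma=(n,x_1,\dots,x_n)$ with $x_i\in[q]$; in round $i$ the algorithm learns $n$ (if $i=1$) or $x_{i-1}$ (if $i>1$) and answers $y_i\in[q]$ depending only on $n,x_1,\dots,x_{i-1}$ (and advice/randomness); cost $\sum_{i}A(x_i,y_i)$; $n$ is called the length. Advice is read from an infinite tape prepared by an oracle knowing the whole input. *)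

theory Defs
  imports "HOL-Probability.Probability"
begin

text \<open>Actions are the elements of [q], represented as the naturals 0, ..., q-1.
  A cost matrix is a function nat => nat => real (only entries below q matter).\<close>

definition mixed_strategies :: "nat \<Rightarrow> (nat \<Rightarrow> real) set" where
  "mixed_strategies q = {p. (\<forall>x<q. 0 \<le> p x) \<and> (\<Sum>x<q. p x) = 1}"

definition game_payoff :: "nat \<Rightarrow> (nat \<Rightarrow> nat \<Rightarrow> real) \<Rightarrow> (nat \<Rightarrow> real) \<Rightarrow> (nat \<Rightarrow> real) \<Rightarrow> real" where
  "game_payoff q A \<mu> \<nu> = (\<Sum>x<q. \<Sum>y<q. \<mu> x * \<nu> y * A x y)"

definition game_value :: "nat \<Rightarrow> (nat \<Rightarrow> nat \<Rightarrow> real) \<Rightarrow> real" where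
  "game_value q A = (SUP \<mu>\<in>mixed_strategies q. INF \<nu>\<in>mixed_strategies q. game_payoff q A \<mu> \<nu>)"

text \<open>A deterministic online algorithm: given the length n and the prefix [x_1,...,x_{i-1}],
  it answers y_i.\<close>
type_synonym det_alg = "nat \<Rightarrow> nat list \<Rightarrow> nat"

definition valid_alg :: "nat \<Rightarrow> det_alg \<Rightarrow> bool" where
  "valid_alg q alg \<longleftrightarrow> (\<forall>n pre. alg n pre < q)"

definition valid_input :: "nat \<Rightarrow> nat list \<Rightarrow> bool" where
  "valid_input q xs \<longleftrightarrow> (\<forall>x\<in>set xs. x < q)"

definition alg_cost :: "(nat \<Rightarrow> nat \<Rightarrow> real) \<Rightarrow> det_alg \<Rightarrow> nat list \<Rightarrow> real" where
  "alg_cost A alg xs = (\<Sum>i<length xs. A (xs ! i) (alg (length xs) (take i xs)))"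

text \<open>A deterministic algorithm with advice reads an infinite advice tape (nat => bool);
  it reads at most b bits if its behaviour depends only on the first b bits of the tape.\<close>
type_synonym advice_alg = "(nat \<Rightarrow> bool) \<Rightarrow> det_alg"

definition reads_at_most :: "nat \<Rightarrow> advice_alg \<Rightarrow> bool" where
  "reads_at_most b alg \<longleftrightarrow> (\<forall>t t'. (\<forall>j<b. t j = t' j) \<longrightarrow> alg t = alg t')"

end

theory Submission
  imports Defs
begin

text \<open>The column player has a mixed strategy \<open>\<nu>\<close> that holds every row below the value \<open>V\<close>:
  \<open>\<Sum>y. \<nu> y * A x y \<le> V\<close> for each \<open>x\<close>. This half of the minimax theorem follows by
  minimising the total squared excess \<open>\<Sum>x. (max 0 (\<Sum>y. \<nu> y * A x y - V))\<^sup>2\<close> over the compact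
  simplex: if the minimum were positive, a near-best response to the row strategy proportional to
  the excess is a direction of strict decrease. Drawing a single column from \<open>\<nu>\<close> and playing it
  in every round then costs at most \<open>V\<close> per round in expectation, whatever the input. For the
  advice version the oracle writes in binary the fixed column with the least total cost on the
  actual input, which is at most the \<open>\<nu>\<close>-average, hence at most \<open>V n\<close>.\<close>

lemma continuous_on_coordinate [continuous_intros]: "continuous_on S (\<lambda>f::nat \<Rightarrow> real. f i)"
  by (rule continuous_on_subset[OF continuous_on_product_coordinates]) simp

lemma mixed_strategy_le_1:
  assumes "\<mu> \<in> mixed_strategies q" and "x < q"
  shows "\<mu> x \<le> 1"
proof -
  have "\<mu> x \<le> (\<Sum>y<q. \<mu> y)"
    using assms unfolding mixed_strategies_def by (intro member_le_sum) auto
  with assms(1) show ?thesis unfolding mixed_strategies_def by simp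
qed

text \<open>Unlike \<open>mixed_strategies q\<close>, which leaves the entries outside \<open>[q]\<close> unconstrained, this
  set is compact in the product topology of \<open>nat \<Rightarrow> real\<close>.\<close>
definition strategy_simplex :: "nat \<Rightarrow> (nat \<Rightarrow> real) set" where
  "strategy_simplex q = {f \<in> mixed_strategies q. \<forall>i\<ge>q. f i = 0}"

lemma strategy_simplex_subset: "strategy_simplex q \<subseteq> mixed_strategies q"
  unfolding strategy_simplex_def by blast

lemma restrict_in_strategy_simplex:
  "\<mu> \<in> mixed_strategies q \<Longrightarrow> (\<lambda>i. if i < q then \<mu> i else 0) \<in> strategy_simplex q"
  unfolding strategy_simplex_def mixed_strategies_def by auto

lemma strategy_simplex_imp_pos:
  assumes "\<nu> \<in> strategy_simplex q"
  shows "0 < q"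
proof (rule ccontr)
  assume "\<not> 0 < q"
  with assms show False unfolding strategy_simplex_def mixed_strategies_def by simp
qed

lemma compact_strategy_simplex: "compact (strategy_simplex q)"
proof -
  let ?box = "PiE UNIV (\<lambda>i. if i < q then {0..1::real} else {0})"
  have "compactin (product_topology (\<lambda>i. euclidean) UNIV) ?box"
    by (subst compactin_PiE) auto
  then have "compact ?box" by (simp add: euclidean_product_topology)
  moreover have "closed {f::nat \<Rightarrow> real. (\<Sum>i<q. f i) = 1}"
    by (intro closed_Collect_eq continuous_intros)
  moreover have "strategy_simplex q = ?box \<inter> {f. (\<Sum>i<q. f i) = 1}"
  proof (intro set_eqI iffI)
    fix f assume f: "f \<in> strategy_simplex q"
    then have "f i \<in> (if i < q then {0..1} else {0})" for i
      using mixed_strategy_le_1[of f q i]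
      unfolding strategy_simplex_def mixed_strategies_def by auto
    with f show "f \<in> ?box \<inter> {f. (\<Sum>i<q. f i) = 1}"
      unfolding strategy_simplex_def mixed_strategies_def by (simp add: PiE_iff)
  next
    fix f assume "f \<in> ?box \<inter> {f. (\<Sum>i<q. f i) = 1}"
    then have "f i \<in> (if i < q then {0..1} else {0})" for i
      by (simp add: PiE_iff)
    then have "\<forall>i<q. 0 \<le> f i" "\<forall>i\<ge>q. f i = 0"
      by (metis atLeastAtMost_iff, metis not_le singletonD)
    with \<open>f \<in> _ \<inter> _\<close> show "f \<in> strategy_simplex q"
      unfolding strategy_simplex_def mixed_strategies_def by simp
  qed
  ultimately show ?thesis by auto
qed

lemma convex_combination_in_strategy_simplex:
  assumes "\<nu> \<in> strategy_simplex q" "\<nu>' \<in> strategy_simplex q" "0 \<le> t" "t \<le> 1"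
  shows "(\<lambda>i. (1 - t) * \<nu> i + t * \<nu>' i) \<in> strategy_simplex q"
proof -
  have "\<forall>i<q. 0 \<le> (1 - t) * \<nu> i + t * \<nu>' i"
    using assms unfolding strategy_simplex_def mixed_strategies_def by auto
  moreover have "(\<Sum>i<q. (1 - t) * \<nu> i + t * \<nu>' i) = 1"
    using assms unfolding strategy_simplex_def mixed_strategies_def
    by (simp add: sum.distrib sum_distrib_left[symmetric])
  ultimately show ?thesis
    using assms unfolding strategy_simplex_def mixed_strategies_def by simp
qed

definition row_payoff :: "nat \<Rightarrow> (nat \<Rightarrow> nat \<Rightarrow> real) \<Rightarrow> (nat \<Rightarrow> real) \<Rightarrow> nat \<Rightarrow> real" where
  "row_payoff q A \<nu> x = (\<Sum>y<q. \<nu> y * A x y)"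

definition pure_strategy :: "nat \<Rightarrow> nat \<Rightarrow> real" where
  "pure_strategy y = (\<lambda>i. if i = y then 1 else 0)"

lemma game_payoff_eq_row_payoff: "game_payoff q A \<mu> \<nu> = (\<Sum>x<q. \<mu> x * row_payoff q A \<nu> x)"
  unfolding game_payoff_def row_payoff_def by (simp add: sum_distrib_left mult.assoc)

lemma row_payoff_restrict: "row_payoff q A (\<lambda>i. if i < q then \<nu> i else 0) = row_payoff q A \<nu>"
  unfolding row_payoff_def by (intro ext sum.cong) auto

lemma row_payoff_pure_strategy:
  assumes "y < q"
  shows "row_payoff q A (pure_strategy y) x = A x y"
proof -
  have "row_payoff q A (pure_strategy y) x = (\<Sum>i<q. if i = y then A x i else 0)"
    unfolding row_payoff_def pure_strategy_def by (intro sum.cong) auto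
  with assms show ?thesis by simp
qed

lemma pure_strategy_in_strategy_simplex: "y < q \<Longrightarrow> pure_strategy y \<in> strategy_simplex q"
  unfolding strategy_simplex_def mixed_strategies_def pure_strategy_def by auto

lemma game_payoff_nonneg:
  assumes "\<forall>x<q. \<forall>y<q. 0 \<le> A x y" "\<mu> \<in> mixed_strategies q" "\<nu> \<in> mixed_strategies q"
  shows "0 \<le> game_payoff q A \<mu> \<nu>"
  using assms unfolding game_payoff_def mixed_strategies_def by (auto intro!: sum_nonneg)

lemma INF_game_payoff_le_game_value:
  assumes "0 < q" and A_nonneg: "\<forall>x<q. \<forall>y<q. 0 \<le> A x y" and "\<mu> \<in> mixed_strategies q"
  shows "(INF \<nu>\<in>mixed_strategies q. game_payoff q A \<mu> \<nu>) \<le> game_value q A"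
proof -
  let ?M = "mixed_strategies q"
  have pure_0: "pure_strategy 0 \<in> ?M"
    using assms(1) pure_strategy_in_strategy_simplex strategy_simplex_subset by blast
  have "(INF \<nu>\<in>?M. game_payoff q A \<mu>' \<nu>) \<le> (\<Sum>x<q. A x 0)" if "\<mu>' \<in> ?M" for \<mu>'
  proof -
    have "(INF \<nu>\<in>?M. game_payoff q A \<mu>' \<nu>) \<le> game_payoff q A \<mu>' (pure_strategy 0)"
      using game_payoff_nonneg[OF A_nonneg that] pure_0
      by (intro cINF_lower bdd_belowI[where m = 0]) auto
    also have "\<dots> = (\<Sum>x<q. \<mu>' x * A x 0)"
      using assms(1) by (simp add: game_payoff_eq_row_payoff row_payoff_pure_strategy)
    also have "\<dots> \<le> (\<Sum>x<q. A x 0)"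
      using that A_nonneg assms(1) mixed_strategy_le_1[OF that]
      unfolding mixed_strategies_def by (intro sum_mono mult_left_le_one_le) auto
    finally show ?thesis .
  qed
  then show ?thesis
    unfolding game_value_def using assms(3) by (intro cSUP_upper bdd_aboveI2) auto
qed

lemma exists_game_payoff_less_game_value:
  assumes "0 < q" and A_nonneg: "\<forall>x<q. \<forall>y<q. 0 \<le> A x y"
    and \<mu>: "\<mu> \<in> mixed_strategies q" and "0 < \<epsilon>"
  shows "\<exists>\<nu>\<in>strategy_simplex q. game_payoff q A \<mu> \<nu> < game_value q A + \<epsilon>"
proof -
  let ?M = "mixed_strategies q"
  have "(INF \<nu>\<in>?M. game_payoff q A \<mu> \<nu>) < game_value q A + \<epsilon>"
    using INF_game_payoff_le_game_value[OF assms(1-3)] \<open>0 < \<epsilon>\<close> by linarith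
  moreover have "?M \<noteq> {}"
    using assms(1) pure_strategy_in_strategy_simplex strategy_simplex_subset by blast
  ultimately obtain \<nu> where "\<nu> \<in> ?M" "game_payoff q A \<mu> \<nu> < game_value q A + \<epsilon>"
    using game_payoff_nonneg[OF A_nonneg \<mu>]
    by (subst (asm) cINF_less_iff) (auto intro: bdd_belowI[where m = 0])
  then show ?thesis
    by (intro bexI[of _ "\<lambda>i. if i < q then \<nu> i else 0"])
       (simp_all add: game_payoff_eq_row_payoff row_payoff_restrict restrict_in_strategy_simplex)
qed

lemma power2_max_0_le: "(max 0 (b::real))\<^sup>2 \<le> (max 0 a + (b - a))\<^sup>2"
  by (cases "b \<le> 0"; cases "a \<le> 0") (auto simp: power2_eq_square intro: mult_mono)

lemma sum_power2_max_0_decreases: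
  fixes r d :: "'a \<Rightarrow> real"
  assumes s_neg: "(\<Sum>x\<in>X. max 0 (r x) * d x) < 0"
  shows "\<exists>t. 0 < t \<and> t \<le> 1 \<and>
    (\<Sum>x\<in>X. (max 0 (r x + t * d x))\<^sup>2) < (\<Sum>x\<in>X. (max 0 (r x))\<^sup>2)"
proof -
  define s where "s = (\<Sum>x\<in>X. max 0 (r x) * d x)"
  define D where "D = (\<Sum>x\<in>X. (d x)\<^sup>2)"
  \<comment> \<open>small enough that the quadratic term \<open>t\<^sup>2 D\<close> is dominated by the linear term \<open>2 t s\<close>\<close>
  define t where "t = min 1 (- s / (D + 1))"
  have "0 \<le> D" unfolding D_def by (simp add: sum_nonneg)
  have "0 < t" unfolding t_def using s_neg \<open>0 \<le> D\<close> by (simp add: s_def field_simps)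
  have "t * D \<le> - s / (D + 1) * D"
    unfolding t_def using \<open>0 \<le> D\<close> by (intro mult_right_mono) auto
  also have "\<dots> < - s" using \<open>0 \<le> D\<close> s_neg by (simp add: s_def field_simps)
  finally have "t * (2 * s + t * D) < 0"
    using \<open>0 < t\<close> s_neg by (intro mult_pos_neg) (auto simp: s_def)
  have "(\<Sum>x\<in>X. (max 0 (r x + t * d x))\<^sup>2) \<le> (\<Sum>x\<in>X. (max 0 (r x) + t * d x)\<^sup>2)"
    using power2_max_0_le by (intro sum_mono) (metis add_diff_cancel_left')
  also have "\<dots> = (\<Sum>x\<in>X. (max 0 (r x))\<^sup>2) + t * (2 * s + t * D)"
    unfolding s_def D_def
    by (simp add: power2_eq_square algebra_simps sum.distrib sum_distrib_left)
  also have "\<dots> < (\<Sum>x\<in>X. (max 0 (r x))\<^sup>2)"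
    using \<open>t * (2 * s + t * D) < 0\<close> by simp
  finally show ?thesis using \<open>0 < t\<close> by (intro exI[of _ t]) (simp add: t_def)
qed

lemma exists_improving_strategy:
  assumes "0 < q" and A_nonneg: "\<forall>x<q. \<forall>y<q. 0 \<le> A x y"
    and "x\<^sub>0 < q" and "game_value q A < row_payoff q A \<nu> x\<^sub>0"
  shows "\<exists>\<nu>'\<in>strategy_simplex q. (\<Sum>x<q. max 0 (row_payoff q A \<nu> x - game_value q A) *
                                       (row_payoff q A \<nu>' x - row_payoff q A \<nu> x)) < 0"
proof -
  define V where "V = game_value q A"
  define p where "p x = max 0 (row_payoff q A \<nu> x - V)" for x
  define P where "P = (\<Sum>x<q. p x)"
  define Sq where "Sq = (\<Sum>x<q. (p x)\<^sup>2)"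
  have p_nonneg: "0 \<le> p x" for x unfolding p_def by simp
  have "0 < p x\<^sub>0" using assms(4) unfolding p_def V_def by simp
  moreover have "p x\<^sub>0 \<le> P" "(p x\<^sub>0)\<^sup>2 \<le> Sq"
    unfolding P_def Sq_def using assms(3) p_nonneg by (auto intro: member_le_sum)
  ultimately have "0 < P" "0 < Sq"
    by (simp_all add: order_less_le_trans[of 0 "(p x\<^sub>0)\<^sup>2"])
  have "(\<lambda>x. p x / P) \<in> mixed_strategies q"
    unfolding mixed_strategies_def using p_nonneg \<open>0 < P\<close>
    by (simp add: sum_divide_distrib[symmetric] P_def)
  \<comment> \<open>Against \<open>\<nu>\<close> this row strategy earns exactly \<open>V + Sq / P\<close>.\<close>
  from exists_game_payoff_less_game_value[OF assms(1,2) this, of "Sq / P"] \<open>0 < P\<close> \<open>0 < Sq\<close>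
  obtain \<nu>' where \<nu>': "\<nu>' \<in> strategy_simplex q"
    and "game_payoff q A (\<lambda>x. p x / P) \<nu>' < V + Sq / P"
    by (auto simp: V_def)
  moreover have "game_payoff q A (\<lambda>x. p x / P) \<nu>' = (\<Sum>x<q. p x * row_payoff q A \<nu>' x) / P"
    by (simp add: game_payoff_eq_row_payoff sum_divide_distrib)
  ultimately have "(\<Sum>x<q. p x * row_payoff q A \<nu>' x) < V * P + Sq"
    using \<open>0 < P\<close> by (simp add: field_simps)
  moreover have "(\<Sum>x<q. p x * row_payoff q A \<nu> x) = Sq + V * P"
  proof -
    have "p x * row_payoff q A \<nu> x = (p x)\<^sup>2 + V * p x" for x
      unfolding p_def by (auto simp: max_def power2_eq_square algebra_simps)
    then show ?thesis unfolding Sq_def P_def by (simp add: sum.distrib sum_distrib_left)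
  qed
  moreover have "(\<Sum>x<q. p x * (row_payoff q A \<nu>' x - row_payoff q A \<nu> x)) =
      (\<Sum>x<q. p x * row_payoff q A \<nu>' x) - (\<Sum>x<q. p x * row_payoff q A \<nu> x)"
    by (simp add: right_diff_distrib sum_subtractf)
  ultimately have "(\<Sum>x<q. p x * (row_payoff q A \<nu>' x - row_payoff q A \<nu> x)) < 0"
    by linarith
  with \<nu>' show ?thesis unfolding p_def V_def by blast
qed

lemma exists_strategy_row_payoff_le_game_value:
  assumes "0 < q" and A_nonneg: "\<forall>x<q. \<forall>y<q. 0 \<le> A x y"
  shows "\<exists>\<nu>\<in>strategy_simplex q. \<forall>x<q. row_payoff q A \<nu> x \<le> game_value q A"
proof -
  define V where "V = game_value q A"
  define excess where "excess \<nu> = (\<Sum>x<q. (max 0 (row_payoff q A \<nu> x - V))\<^sup>2)" for \<nu>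
  have "strategy_simplex q \<noteq> {}"
    using assms(1) pure_strategy_in_strategy_simplex by blast
  moreover have "continuous_on (strategy_simplex q) excess"
    unfolding excess_def row_payoff_def by (intro continuous_intros)
  ultimately obtain \<nu> where \<nu>: "\<nu> \<in> strategy_simplex q"
    and \<nu>_min: "\<forall>\<nu>'\<in>strategy_simplex q. excess \<nu> \<le> excess \<nu>'"
    using continuous_attains_inf[OF compact_strategy_simplex] by blast
  have "row_payoff q A \<nu> x \<le> V" if x: "x < q" for x
  proof (rule ccontr)
    assume "\<not> row_payoff q A \<nu> x \<le> V"
    then have "game_value q A < row_payoff q A \<nu> x" unfolding V_def by simp
    then obtain \<nu>' where \<nu>': "\<nu>' \<in> strategy_simplex q"
      and "(\<Sum>x<q. max 0 (row_payoff q A \<nu> x - V) *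
                   (row_payoff q A \<nu>' x - row_payoff q A \<nu> x)) < 0"
      using exists_improving_strategy[OF assms x] unfolding V_def by blast
    from sum_power2_max_0_decreases[OF this(2)] obtain t where "0 < t" "t \<le> 1"
      and decrease: "(\<Sum>x<q. (max 0 (row_payoff q A \<nu> x - V +
                        t * (row_payoff q A \<nu>' x - row_payoff q A \<nu> x)))\<^sup>2) < excess \<nu>"
      unfolding excess_def by blast
    define \<nu>\<^sub>t where "\<nu>\<^sub>t i = (1 - t) * \<nu> i + t * \<nu>' i" for i
    have "row_payoff q A \<nu>\<^sub>t x - V =
          row_payoff q A \<nu> x - V + t * (row_payoff q A \<nu>' x - row_payoff q A \<nu> x)" for x
      unfolding row_payoff_def \<nu>\<^sub>t_def
      by (simp add: algebra_simps sum.distrib sum_distrib_left sum_subtractf)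
    then have "excess \<nu>\<^sub>t < excess \<nu>"
      using decrease unfolding excess_def by (simp only:)
    moreover have "\<nu>\<^sub>t \<in> strategy_simplex q"
      unfolding \<nu>\<^sub>t_def using \<nu> \<nu>' \<open>0 < t\<close> \<open>t \<le> 1\<close>
      by (intro convex_combination_in_strategy_simplex) auto
    ultimately show False using \<nu>_min by (meson leD)
  qed
  with \<nu> show ?thesis unfolding V_def by blast
qed

definition const_alg :: "nat \<Rightarrow> det_alg" where
  "const_alg y = (\<lambda>_ _. y)"

lemma weighted_alg_cost_const_alg_le:
  assumes "\<forall>x<q. row_payoff q A \<nu> x \<le> V" and "valid_input q xs"
  shows "(\<Sum>y<q. \<nu> y * alg_cost A (const_alg y) xs) \<le> V * real (length xs)"
proof -
  have "(\<Sum>y<q. \<nu> y * alg_cost A (const_alg y) xs) = (\<Sum>i<length xs. row_payoff q A \<nu> (xs ! i))"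
    unfolding alg_cost_def const_alg_def row_payoff_def
    by (simp add: sum_distrib_left sum.swap[of _ "{..<q}"])
  also have "\<dots> \<le> (\<Sum>i<length xs. V)"
    using assms unfolding valid_input_def by (intro sum_mono) auto
  finally show ?thesis by (simp add: mult.commute)
qed

lemma exists_le_weighted_average:
  fixes f :: "nat \<Rightarrow> real"
  assumes "\<nu> \<in> strategy_simplex q"
  shows "\<exists>y<q. f y \<le> (\<Sum>z<q. \<nu> z * f z)"
proof -
  define y where "y = arg_min_on f {..<q}"
  have "{..<q} \<noteq> {}" using strategy_simplex_imp_pos[OF assms] by auto
  from arg_min_if_finite[OF finite_lessThan this, of f]
  have y: "y < q" and y_min: "\<And>z. z < q \<Longrightarrow> f y \<le> f z"
    unfolding y_def by (auto simp: not_less)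
  have "f y = (\<Sum>z<q. \<nu> z * f y)"
    using assms unfolding strategy_simplex_def mixed_strategies_def
    by (simp add: sum_distrib_right[symmetric])
  also have "\<dots> \<le> (\<Sum>z<q. \<nu> z * f z)"
    using assms y_min unfolding strategy_simplex_def mixed_strategies_def
    by (intro sum_mono mult_left_mono) auto
  finally show ?thesis using y by blast
qed

lemma pmf_embed_pmf_strategy:
  assumes "\<nu> \<in> strategy_simplex q"
  shows "pmf (embed_pmf \<nu>) = \<nu>" and "set_pmf (embed_pmf \<nu>) \<subseteq> {..<q}"
proof -
  have nonneg: "0 \<le> \<nu> y" and zero: "q \<le> y \<Longrightarrow> \<nu> y = 0" for y
    using assms unfolding strategy_simplex_def mixed_strategies_def by (cases "y < q"; auto)+
  have "(\<integral>\<^sup>+y. ennreal (\<nu> y) \<partial>count_space UNIV) = (\<Sum>y<q. ennreal (\<nu> y))"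
    by (rule nn_integral_count_space') (auto simp: zero)
  also have "\<dots> = 1"
    using assms nonneg unfolding strategy_simplex_def mixed_strategies_def
    by (simp add: sum_ennreal)
  finally show "pmf (embed_pmf \<nu>) = \<nu>"
    using pmf_embed_pmf[of \<nu>] nonneg by blast
  then show "set_pmf (embed_pmf \<nu>) \<subseteq> {..<q}"
    unfolding set_pmf_eq using zero by (auto simp: not_less[symmetric])
qed

lemma randomized_const_alg_cost_le:
  assumes \<nu>: "\<nu> \<in> strategy_simplex q" and row_le: "\<forall>x<q. row_payoff q A \<nu> x \<le> V"
  shows "\<exists>R :: det_alg pmf. (\<forall>alg\<in>set_pmf R. valid_alg q alg) \<and>
    (\<forall>xs. valid_input q xs \<longrightarrow>
       measure_pmf.expectation R (\<lambda>alg. alg_cost A alg xs) \<le> V * real (length xs))"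
proof (intro exI conjI allI impI ballI)
  let ?R = "map_pmf const_alg (embed_pmf \<nu>)"
  show "valid_alg q alg" if "alg \<in> set_pmf ?R" for alg
    using that pmf_embed_pmf_strategy(2)[OF \<nu>] unfolding valid_alg_def const_alg_def by auto
  fix xs assume xs: "valid_input q xs"
  have "measure_pmf.expectation ?R (\<lambda>alg. alg_cost A alg xs) =
        measure_pmf.expectation (embed_pmf \<nu>) (\<lambda>y. alg_cost A (const_alg y) xs)"
    by simp
  also have "\<dots> = (\<Sum>y<q. \<nu> y * alg_cost A (const_alg y) xs)"
    using pmf_embed_pmf_strategy[OF \<nu>] by (subst integral_measure_pmf[of "{..<q}"]) auto
  also have "\<dots> \<le> V * real (length xs)"
    using weighted_alg_cost_const_alg_le[OF row_le xs] .
  finally show "measure_pmf.expectation ?R (\<lambda>alg. alg_cost A alg xs) \<le> V * real (length xs)" .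
qed

definition decode_advice :: "nat \<Rightarrow> (nat \<Rightarrow> bool) \<Rightarrow> nat" where
  "decode_advice b t = horner_sum of_bool 2 (map t [0..<b])"

lemma decode_advice_bit: "y < 2 ^ b \<Longrightarrow> decode_advice b (bit y) = y"
  unfolding decode_advice_def horner_sum_bit_eq_take_bit by (simp add: take_bit_nat_eq_self_iff)

lemma reads_at_most_decode_advice: "reads_at_most b (\<lambda>t. F (decode_advice b t))"
  unfolding reads_at_most_def
proof (intro allI impI)
  fix t t' :: "nat \<Rightarrow> bool"
  assume "\<forall>j<b. t j = t' j"
  then have "map t [0..<b] = map t' [0..<b]" by simp
  then show "F (decode_advice b t) = F (decode_advice b t')" unfolding decode_advice_def by (simp only:)
qed

lemma advice_const_alg_cost_le:
  assumes "q \<le> 2 ^ b" and \<nu>: "\<nu> \<in> strategy_simplex q"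
    and row_le: "\<forall>x<q. row_payoff q A \<nu> x \<le> V"
  shows "\<exists>ALG :: advice_alg. (\<forall>t. valid_alg q (ALG t)) \<and> reads_at_most b ALG \<and>
    (\<forall>xs. valid_input q xs \<longrightarrow> (\<exists>t. alg_cost A (ALG t) xs \<le> V * real (length xs)))"
proof -
  define ALG :: advice_alg
    where "ALG = (\<lambda>t. const_alg (let y = decode_advice b t in if y < q then y else 0))"
  have "valid_alg q (ALG t)" for t
    using strategy_simplex_imp_pos[OF \<nu>]
    unfolding ALG_def valid_alg_def const_alg_def Let_def by auto
  moreover have "reads_at_most b ALG"
    unfolding ALG_def by (rule reads_at_most_decode_advice)
  moreover have "\<exists>t. alg_cost A (ALG t) xs \<le> V * real (length xs)" if xs: "valid_input q xs" for xs
  proof -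
    obtain y where "y < q"
      and y_le: "alg_cost A (const_alg y) xs \<le> (\<Sum>z<q. \<nu> z * alg_cost A (const_alg z) xs)"
      using exists_le_weighted_average[OF \<nu>, of "\<lambda>z. alg_cost A (const_alg z) xs"] by blast
    have "ALG (bit y) = const_alg y"
      using \<open>y < q\<close> assms(1) unfolding ALG_def by (simp add: decode_advice_bit)
    with y_le weighted_alg_cost_const_alg_le[OF row_le xs] show ?thesis
      by (intro exI[of _ "bit y"]) simp
  qed
  ultimately show ?thesis by blast
qed

lemma le_two_power_ceiling_log:
  assumes "0 < q"
  shows "q \<le> 2 ^ nat \<lceil>log 2 (real q)\<rceil>"
proof -
  have "real q = 2 powr log 2 (real q)" using assms by simp
  also have "\<dots> \<le> 2 powr real (nat \<lceil>log 2 (real q)\<rceil>)"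
    by (intro powr_mono) linarith+
  also have "\<dots> = real (2 ^ nat \<lceil>log 2 (real q)\<rceil>)"
    by (simp add: powr_realpow)
  finally show ?thesis by linarith
qed

theorem theorem8:
  fixes q :: nat and A :: "nat \<Rightarrow> nat \<Rightarrow> real"
  assumes "q \<ge> 2"
    and "\<forall>x<q. \<forall>y<q. 0 \<le> A x y"
  shows "(\<exists>R :: det_alg pmf.
            (\<forall>alg\<in>set_pmf R. valid_alg q alg) \<and>
            (\<forall>xs. valid_input q xs \<longrightarrow>
               measure_pmf.expectation R (\<lambda>alg. alg_cost A alg xs)
                 \<le> game_value q A * real (length xs)))
       \<and> (\<exists>ALG :: advice_alg.
            (\<forall>t. valid_alg q (ALG t)) \<and>
            reads_at_most (nat \<lceil>log 2 (real q)\<rceil>) ALG \<and>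
            (\<forall>xs. valid_input q xs \<longrightarrow>
               (\<exists>t. alg_cost A (ALG t) xs \<le> game_value q A * real (length xs))))"
proof -
  have "0 < q" using assms(1) by simp
  then obtain \<nu> where \<nu>: "\<nu> \<in> strategy_simplex q"
    and row_le: "\<forall>x<q. row_payoff q A \<nu> x \<le> game_value q A"
    using exists_strategy_row_payoff_le_game_value assms(2) by blast
  show ?thesis
    using randomized_const_alg_cost_le[OF \<nu> row_le]
      advice_const_alg_cost_le[OF le_two_power_ceiling_log[OF \<open>0 < q\<close>] \<nu> row_le]
    by (rule conjI)
qed

end
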